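(* Let $X$ be a set, $B=(B,+,0)$ a unitary magma and $(A,k,q,s,p)$ a retraction point from $X$ to $B$. Then for all $x,x'\in X$ and $b,b'\in B$: (a) $k(q(0))=0$ and $q(k(x)+k(q(0)))=x=q(k(q(0))+k(x))$; (b) $q(k(x)+s(b))=q((k(x)+0)+(0+s(b)))=q((k(x)+s(b))+(0+0))=q((0+0)+(k(x)+s(b)))$; (c) $q(s(b)+s(b'))=q(0)$; (d) $q\big((k(x)+s(b))+(k(x')+s(b'))\big)=q\big(k(w)+s(b+b')\big)$, where $u=q(k(x)+s(b))$, $v=q(k(x')+s(b'))$ and $w=q\big((k(u)+s(b))+(k(v)+s(b'))\big)$.
   Context: A unitary magma is a set with a binary operation $+$ and an element $0$ with $b+0=b=0+b$ for all $b$; morphisms preserve $+$ and $0$. Given a set $X$ and a unitary magma $B$, a retraction point from $X$ to $B$ is a tuple $(A,k,q,s,p)$ where $A=(A,+,0)$ is a unitary magma, $k\colon X\to A$ and $q\colon A\to X$ are maps, $s\colon B\to A$ and $p\colon A\to B$ are morphisms of unitary magmas, and $p(s(b))=b$, $q(k(x))=x$, $p(k(x))=0$, $q(s(b))=q(0)$, and $k(q(a))+s(p(a))=a$ for all $x\in X$, $b\in B$, $a\in A$. *)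

theory Defs
  imports Main
begin

definition unitary_magma :: "('a \<Rightarrow> 'a \<Rightarrow> 'a) \<Rightarrow> 'a \<Rightarrow> bool" where
  "unitary_magma add z \<longleftrightarrow> (\<forall>b. add b z = b \<and> add z b = b)"

definition um_morphism ::
  "('a \<Rightarrow> 'a \<Rightarrow> 'a) \<Rightarrow> 'a \<Rightarrow> ('b \<Rightarrow> 'b \<Rightarrow> 'b) \<Rightarrow> 'b \<Rightarrow> ('a \<Rightarrow> 'b) \<Rightarrow> bool" where
  "um_morphism addA zA addB zB f \<longleftrightarrow>
     (\<forall>x y. f (addA x y) = addB (f x) (f y)) \<and> f zA = zB"

definition retraction_point ::
  "('b \<Rightarrow> 'b \<Rightarrow> 'b) \<Rightarrow> 'b \<Rightarrow> ('a \<Rightarrow> 'a \<Rightarrow> 'a) \<Rightarrow> 'a \<Rightarrow>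
   ('x \<Rightarrow> 'a) \<Rightarrow> ('a \<Rightarrow> 'x) \<Rightarrow> ('b \<Rightarrow> 'a) \<Rightarrow> ('a \<Rightarrow> 'b) \<Rightarrow> bool" where
  "retraction_point addB zB addA zA k q s p \<longleftrightarrow>
     unitary_magma addA zA \<and>
     um_morphism addB zB addA zA s \<and> um_morphism addA zA addB zB p \<and>
     (\<forall>b. p (s b) = b) \<and> (\<forall>x. q (k x) = x) \<and> (\<forall>x. p (k x) = zB) \<and>
     (\<forall>b. q (s b) = q zA) \<and> (\<forall>a. addA (k (q a)) (s (p a)) = a)"

end

theory Submission
  imports Defs
begin

text \<open>Everything follows from the decomposition \<open>a = k (q a) + s (p a)\<close>: the element
  \<open>k x + s b\<close> is recovered from \<open>q\<close> and \<open>p\<close> of it, and \<open>p (k x + s b) = b\<close>. For (d) this shows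
  that \<open>k u + s b = k x + s b\<close> and \<open>k v + s b' = k x' + s b'\<close>, so \<open>w = q a\<close> for
  \<open>a = (k x + s b) + (k x' + s b')\<close>, while \<open>p a = b + b'\<close>; decomposing \<open>a\<close> gives the claim.\<close>

locale retraction_point_to_magma =
  fixes addB :: "'b \<Rightarrow> 'b \<Rightarrow> 'b" (infixl "\<oplus>\<^sub>B" 65) and zB :: 'b
    and addA :: "'a \<Rightarrow> 'a \<Rightarrow> 'a" (infixl "\<oplus>" 65) and zA :: 'a
    and k :: "'x \<Rightarrow> 'a" and q :: "'a \<Rightarrow> 'x" and s :: "'b \<Rightarrow> 'a" and p :: "'a \<Rightarrow> 'b"
  assumes magma_B: "unitary_magma addB zB"
    and retraction: "retraction_point addB zB addA zA k q s p"
begin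

lemma add_zero_right [simp]: "a \<oplus> zA = a"
  and add_zero_left [simp]: "zA \<oplus> a = a"
  using retraction by (auto simp: retraction_point_def unitary_magma_def)

lemma addB_zero_left [simp]: "zB \<oplus>\<^sub>B b = b"
  using magma_B by (auto simp: unitary_magma_def)

lemma s_add: "s (b \<oplus>\<^sub>B b') = s b \<oplus> s b'"
  and s_zero [simp]: "s zB = zA"
  and p_add [simp]: "p (a \<oplus> a') = p a \<oplus>\<^sub>B p a'"
  and p_zero [simp]: "p zA = zB"
  using retraction by (auto simp: retraction_point_def um_morphism_def)

lemma p_s [simp]: "p (s b) = b"
  and q_k [simp]: "q (k x) = x"
  and p_k [simp]: "p (k x) = zB"
  and q_s: "q (s b) = q zA"
  and k_q_add_s_p: "k (q a) \<oplus> s (p a) = a"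
  using retraction by (auto simp: retraction_point_def)

lemma k_q_zero [simp]: "k (q zA) = zA"
  using k_q_add_s_p [of zA] by simp

lemma q_s_add_s: "q (s b \<oplus> s b') = q zA"
  by (simp only: s_add [symmetric] q_s)

lemma k_q_k_add_s: "k (q (k x \<oplus> s b)) \<oplus> s b = k x \<oplus> s b"
  using k_q_add_s_p [of "k x \<oplus> s b"] by simp

lemma q_add_k_add_s_eq_q_k_add_s:
  "q ((k x \<oplus> s b) \<oplus> (k x' \<oplus> s b')) =
   q (k (q ((k (q (k x \<oplus> s b)) \<oplus> s b) \<oplus> (k (q (k x' \<oplus> s b')) \<oplus> s b'))) \<oplus> s (b \<oplus>\<^sub>B b'))"
proof -
  let ?a = "(k x \<oplus> s b) \<oplus> (k x' \<oplus> s b')"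
  have "?a = k (q ?a) \<oplus> s (p ?a)"
    by (rule k_q_add_s_p [symmetric])
  then show ?thesis
    by (simp add: k_q_k_add_s)
qed

end

theorem proposition2p2:
  fixes addB :: "'b \<Rightarrow> 'b \<Rightarrow> 'b" and zB :: 'b
    and addA :: "'a \<Rightarrow> 'a \<Rightarrow> 'a" and zA :: 'a
    and k :: "'x \<Rightarrow> 'a" and q :: "'a \<Rightarrow> 'x" and s :: "'b \<Rightarrow> 'a" and p :: "'a \<Rightarrow> 'b"
  assumes "unitary_magma addB zB"
    and "retraction_point addB zB addA zA k q s p"
  shows "\<forall>x x' b b'.
     (k (q zA) = zA \<and>
      q (addA (k x) (k (q zA))) = x \<and> x = q (addA (k (q zA)) (k x))) \<and>
     (q (addA (k x) (s b)) = q (addA (addA (k x) zA) (addA zA (s b))) \<and>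
      q (addA (addA (k x) zA) (addA zA (s b))) = q (addA (addA (k x) (s b)) (addA zA zA)) \<and>
      q (addA (addA (k x) (s b)) (addA zA zA)) = q (addA (addA zA zA) (addA (k x) (s b)))) \<and>
     (q (addA (s b) (s b')) = q zA) \<and>
     (let u = q (addA (k x) (s b));
          v = q (addA (k x') (s b'));
          w = q (addA (addA (k u) (s b)) (addA (k v) (s b')))
      in q (addA (addA (k x) (s b)) (addA (k x') (s b'))) = q (addA (k w) (s (addB b b'))))"
proof -
  interpret retraction_point_to_magma addB zB addA zA k q s p
    using assms by unfold_locales
  show ?thesis
    unfolding Let_def
    by (intro allI conjI q_s_add_s q_add_k_add_s_eq_q_k_add_s) simp_all
qed

end
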